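(* Consider the click-through auction setting with $n\ge 2$ bidders, all with the same value $v_i=v\ge 0$. Suppose the CTR vector is uniformly distributed over two profiles $r,r'\in[0,1]^n$ for which there are two bidders $i\neq j$ such that $r_i=r'_j>r_j=r'_i\ge r_k$ and $r_i=r'_j>r_j=r'_i\ge r'_k$ for every $k\notin\{i,j\}$. Then for every $\varepsilon>0$ there is a calibrated, correlated information structure whose revenue is at least $vr_i-\varepsilon$.
   Context: Setting. There are $n$ bidders; bidder $i$ has known value per click $v_i$. The CTR vector $r\in[0,1]^n$ is drawn from a prior $G$ with finite support. An information structure is a probability distribution with finite support on pairs $(r,s)\in[0,1]^n\times[0,1]^n$ whose $r$-marginal is $G$. Given signals $s$, the winner $i^*$ maximizes $v_is_i$ (uniform tie-breaking), pays per click $p_{i^*}=\max_{j\ne i^*}v_js_j/s_{i^*}$ (revenue $0$ if $s_{i^*}=0$), only upon a click, which occurs with probability $r_{i^*}$; revenue is $\mathbb{E}[r_{i^*}p_{i^*}]$. Calibrated: $\mathbb{E}[r_i\mid s_i=t]=t$ for every $i$ and every $t$ with $\Pr[s_i=t]>0$. Correlated: not independent, where independent means $\mathbb{E}[r_i\mid s]=\mathbb{E}[r_i\mid s_i]$ for all $i$ and all $s$ in the support. *)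

theory Defs
  imports "HOL-Probability.Probability"
begin

text \<open>Bidders are the elements of a finite type 'n (so n = CARD('n)).
  A CTR vector / signal vector is a function 'n \<Rightarrow> real.
  An information structure is a pmf on pairs (r, s).\<close>

type_synonym 'n vec = "'n \<Rightarrow> real"

definition winners :: "'n::finite vec \<Rightarrow> 'n vec \<Rightarrow> 'n set" where
  "winners v s = {i. \<forall>j. v j * s j \<le> v i * s i}"

text \<open>Price per click of bidder i: max of the others' scores divided by s i;
  set to 0 when s i = 0 (then the revenue is 0).\<close>
definition price :: "'n::finite vec \<Rightarrow> 'n vec \<Rightarrow> 'n \<Rightarrow> real" where
  "price v s i = (if s i = 0 then 0 else Max {v j * s j | j. j \<noteq> i} / s i)"

text \<open>Expected revenue given (r, s), with uniform tie-breaking among winners.\<close>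
definition rev_at :: "'n::finite vec \<Rightarrow> 'n vec \<Rightarrow> 'n vec \<Rightarrow> real" where
  "rev_at v r s = (\<Sum>i\<in>winners v s. r i * price v s i) / real (card (winners v s))"

definition revenue :: "'n::finite vec \<Rightarrow> ('n vec \<times> 'n vec) pmf \<Rightarrow> real" where
  "revenue v I = measure_pmf.expectation I (\<lambda>(r, s). rev_at v r s)"

definition is_info_structure :: "'n::finite vec pmf \<Rightarrow> ('n vec \<times> 'n vec) pmf \<Rightarrow> bool" where
  "is_info_structure G I \<longleftrightarrow> finite (set_pmf I) \<and> map_pmf fst I = G \<and>
     (\<forall>x\<in>set_pmf I. \<forall>i. fst x i \<in> {0..1} \<and> snd x i \<in> {0..1})"

definition cexp :: "'a pmf \<Rightarrow> ('a \<Rightarrow> real) \<Rightarrow> 'a set \<Rightarrow> real" where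
  "cexp I f A = measure_pmf.expectation I (\<lambda>x. indicator A x * f x) / measure_pmf.prob I A"

definition calibrated :: "('n::finite vec \<times> 'n vec) pmf \<Rightarrow> bool" where
  "calibrated I \<longleftrightarrow> (\<forall>i t. measure_pmf.prob I {x. snd x i = t} > 0 \<longrightarrow>
      cexp I (\<lambda>x. fst x i) {x. snd x i = t} = t)"

definition independent_is :: "('n::finite vec \<times> 'n vec) pmf \<Rightarrow> bool" where
  "independent_is I \<longleftrightarrow> (\<forall>i. \<forall>x\<in>set_pmf I.
      cexp I (\<lambda>y. fst y i) {y. snd y = snd x} = cexp I (\<lambda>y. fst y i) {y. snd y i = snd x i})"

definition correlated :: "('n::finite vec \<times> 'n vec) pmf \<Rightarrow> bool" where
  "correlated I \<longleftrightarrow> \<not> independent_is I"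

end

theory Submission
  imports Defs
begin

text \<open>Let \<open>a = r i > b = r j\<close> and let \<open>t 0 < \<dots> < t (n + 1)\<close> be the uniform grid from
  \<open>b\<close> to \<open>a\<close>. Draw the profile by a fair coin and \<open>K \<sim> Bin(n, 1/2)\<close> independently; under
  \<open>r\<close> the bidders \<open>(i, j)\<close> are shown \<open>(t (K + 1), t K)\<close>, under \<open>r'\<close> they are shown
  \<open>(t K, t (K + 1))\<close>, and every other bidder sees its mean CTR, which is calibrated because
  both profiles have probability \<open>1/2\<close>. The identity
  \<open>(n choose k) (n - k) = (n choose (k + 1)) (k + 1)\<close> is detailed balance between the two ways
  of showing a grid value: the weight it gets from the profile above it and the weight it gets
  from the profile below it pull its conditional mean exactly onto itself, so every signal is
  calibrated. The bidder whose true CTR is \<open>a\<close> always wins and pays the fraction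
  \<open>t K / t (K + 1) \<ge> K / (K + 1)\<close> of its value per click, so the revenue is at least
  \<open>v a (1 - E[1 / (K + 1)]) \<ge> v a (1 - 2 / (n + 1))\<close>. The full signal reveals the profile,
  while \<open>s i = t 1\<close> alone does not, so the structure is correlated.\<close>

lemma rev_at_single_top:
  fixes v :: real and R s :: "'n::finite vec" and p q :: 'n
  assumes "0 \<le> v" and "p \<noteq> q" and "0 \<le> s q" and "s q < s p"
    and below_q: "\<And>l. l \<noteq> p \<Longrightarrow> l \<noteq> q \<Longrightarrow> s l \<le> s q"
  shows "rev_at (\<lambda>_. v) R s = R p * v * s q / s p"
proof (cases "v = 0")
  case True
  have "winners (\<lambda>_. v) s = UNIV"
    using True by (auto simp: winners_def)
  moreover have "price (\<lambda>_. v) s l = 0" for l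
  proof -
    obtain l' where "l' \<noteq> l"
      using \<open>p \<noteq> q\<close> by metis
    then have "{v * s j' | j'. j' \<noteq> l} = {0}"
      using True by auto
    then show ?thesis by (simp add: price_def)
  qed
  ultimately show ?thesis
    using True by (simp add: rev_at_def)
next
  case False
  with \<open>0 \<le> v\<close> have "0 < v" by simp
  have second: "s l \<le> s q" if "l \<noteq> p" for l
    using below_q[of l] that by (cases "l = q") auto
  then have "s l \<le> s p" and "l \<noteq> p \<Longrightarrow> s l < s p" for l
    using \<open>s q < s p\<close> by (cases "l = p"; fastforce)+
  then have "winners (\<lambda>_. v) s = {p}"
    using \<open>0 < v\<close> by (auto simp: winners_def mult_le_cancel_left_pos not_le[symmetric])
  moreover have "Max {v * s l | l. l \<noteq> p} = v * s q"
  proof (rule Max_eqI)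
    show "v * s q \<in> {v * s l | l. l \<noteq> p}"
      using \<open>p \<noteq> q\<close> by auto
  qed (use second \<open>0 < v\<close> in \<open>auto intro: mult_left_mono\<close>)
  ultimately show ?thesis
    using \<open>0 \<le> s q\<close> \<open>s q < s p\<close> by (simp add: rev_at_def price_def)
qed

definition grid :: "real \<Rightarrow> real \<Rightarrow> nat \<Rightarrow> nat \<Rightarrow> real" where
  "grid a b n x = b + (a - b) * real x / real (Suc n)"

lemma grid_Suc_self [simp]: "grid a b n (Suc n) = a"
  by (simp add: grid_def del: of_nat_Suc)

lemma grid_less_iff:
  assumes "b < a"
  shows "grid a b n x < grid a b n y \<longleftrightarrow> x < y"
proof -
  have "grid a b n y - grid a b n x = (a - b) * (real y - real x) / real (Suc n)"
    by (simp add: grid_def diff_divide_distrib right_diff_distrib)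
  moreover have "grid a b n x < grid a b n y \<longleftrightarrow> 0 < grid a b n y - grid a b n x"
    by simp
  ultimately show ?thesis
    using assms by (simp add: zero_less_divide_iff zero_less_mult_iff del: of_nat_Suc)
qed

lemma grid_eq_iff: "b < a \<Longrightarrow> grid a b n x = grid a b n y \<longleftrightarrow> x = y"
  by (auto simp: grid_def)

lemma grid_lower: "b \<le> a \<Longrightarrow> b \<le> grid a b n x"
  by (simp add: grid_def)

lemma grid_upper:
  assumes "b \<le> a" and "x \<le> Suc n"
  shows "grid a b n x \<le> a"
proof -
  have "(a - b) * (real x / real (Suc n)) \<le> a - b"
    using assms by (intro mult_left_le) auto
  then show ?thesis by (simp add: grid_def)
qed

lemma grid_ratio_ge:
  assumes "0 \<le> b" and "b < a"
  shows "real k / real (Suc k) \<le> grid a b n k / grid a b n (Suc k)"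
proof -
  have "0 < grid a b n (Suc k)"
    using assms by (auto simp: grid_def intro!: add_nonneg_pos simp del: of_nat_Suc)
  moreover have "real k * grid a b n (Suc k) \<le> grid a b n k * real (Suc k)"
    using assms by (simp add: grid_def algebra_simps add_divide_distrib)
  ultimately show ?thesis by (simp add: divide_simps del: of_nat_Suc)
qed

lemma binomial_balance: "real (n choose k) * real (n - k) = real (n choose Suc k) * real (Suc k)"
proof -
  have "(n - k) * (n choose k) = Suc k * (n choose Suc k)"
    by (simp only: binomial_absorb_comp binomial_absorption)
  then show ?thesis by (metis mult.commute of_nat_mult)
qed

lemma sum_binomial_div_power2: "(\<Sum>k\<le>n. real (n choose k) / 2 ^ n) = (1::real)"
proof -
  have "(\<Sum>k\<le>n. real (n choose k)) = (2::real) ^ n"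
    by (metis choose_row_sum of_nat_numeral of_nat_power of_nat_sum)
  then show ?thesis by (simp add: sum_divide_distrib[symmetric])
qed

lemma sum_binomial_div_power2_Suc_le:
  "(\<Sum>k\<le>n. real (n choose k) / 2 ^ n / real (Suc k)) \<le> 2 / real (Suc n)"
proof -
  have term_eq: "real (n choose k) / 2 ^ n / real (Suc k)
      = real (Suc n choose Suc k) / (2 ^ n * real (Suc n))" for k
  proof -
    have "real (Suc n) * real (n choose k) = real (Suc n choose Suc k) * real (Suc k)"
      by (metis Suc_times_binomial_eq of_nat_mult)
    then show ?thesis by (simp add: field_simps del: of_nat_Suc)
  qed
  have "(\<Sum>k\<le>n. real (Suc n choose Suc k)) \<le> (\<Sum>k\<le>Suc n. real (Suc n choose k))"
    unfolding sum.atMost_Suc_shift[of "\<lambda>k. real (Suc n choose k)" n] by simp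
  also have "\<dots> = 2 ^ Suc n"
    by (metis choose_row_sum of_nat_numeral of_nat_power of_nat_sum)
  finally have row_bound: "(\<Sum>k\<le>n. real (Suc n choose Suc k)) \<le> 2 ^ Suc n" .
  have "(\<Sum>k\<le>n. real (n choose k) / 2 ^ n / real (Suc k))
      = (\<Sum>k\<le>n. real (Suc n choose Suc k)) / (2 ^ n * real (Suc n))"
    unfolding term_eq sum_divide_distrib ..
  also have "\<dots> \<le> 2 ^ Suc n / (2 ^ n * real (Suc n))"
    by (rule divide_right_mono[OF row_bound]) simp
  also have "\<dots> = 2 / real (Suc n)"
    by simp
  finally show ?thesis .
qed

lemma expectation_coin_binomial:
  fixes g :: "bool \<times> nat \<Rightarrow> real"
  shows "measure_pmf.expectation (pair_pmf (pmf_of_set UNIV) (binomial_pmf n (1/2))) g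
     = (\<Sum>k\<le>n. real (n choose k) / 2 ^ n / 2 * (g (True, k) + g (False, k)))"
proof -
  let ?P = "pair_pmf (pmf_of_set UNIV) (binomial_pmf n (1/2))"
  have "measure_pmf.expectation ?P g = (\<Sum>x\<in>UNIV \<times> {..n}. g x * pmf ?P x)"
    by (rule integral_measure_pmf_real) auto
  also have "\<dots> = (\<Sum>e\<in>UNIV. \<Sum>k\<le>n. g (e, k) * pmf ?P (e, k))"
    by (simp add: sum.cartesian_product)
  also have "\<dots> = (\<Sum>k\<le>n. g (True, k) * pmf ?P (True, k) + g (False, k) * pmf ?P (False, k))"
    by (simp add: UNIV_bool sum.distrib add.commute)
  also have "\<dots> = (\<Sum>k\<le>n. real (n choose k) / 2 ^ n / 2 * (g (True, k) + g (False, k)))"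
  proof (rule sum.cong[OF refl])
    fix k assume "k \<in> {..n}"
    then have "(1/2::real) ^ k * (1 - 1/2) ^ (n - k) = 1 / 2 ^ n"
      by (simp add: power_divide power_add[symmetric])
    then show "g (True, k) * pmf ?P (True, k) + g (False, k) * pmf ?P (False, k)
        = real (n choose k) / 2 ^ n / 2 * (g (True, k) + g (False, k))"
      by (simp add: pmf_pair field_simps)
  qed
  finally show ?thesis .
qed

lemma grid_balance_sum:
  fixes a b u :: real and n :: nat
  defines "t \<equiv> grid a b n"
  shows "(\<Sum>k\<le>n. real (n choose k) / 2 ^ n / 2 *
     (of_bool (t (Suc k) = u) * (a - u) + of_bool (t k = u) * (b - u))) = 0"
proof -
  define w where "w k = real (n choose k) / 2 ^ n" for k
  define D where "D x = of_bool (t x = u) * w x * real x" for x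
  define c where "c = (a - b) / (2 * real (Suc n))"
  have term_eq: "w k / 2 * (of_bool (t (Suc k) = u) * (a - u) + of_bool (t k = u) * (b - u))
      = c * (D (Suc k) - D k)" if "k \<le> n" for k
  proof -
    have above: "a - t (Suc k) = (a - b) * real (n - k) / real (Suc n)"
      using that by (simp add: t_def grid_def of_nat_diff field_simps)
    have below: "b - t k = - ((a - b) * real k / real (Suc n))"
      by (simp add: t_def grid_def field_simps del: of_nat_Suc)
    have balance: "w k * real (n - k) = w (Suc k) * real (Suc k)"
      using binomial_balance[of n k] by (simp add: w_def field_simps del: of_nat_Suc)
    have "w k / 2 * (of_bool (t (Suc k) = u) * (a - u) + of_bool (t k = u) * (b - u))
        = w k / 2 * (of_bool (t (Suc k) = u) * (a - t (Suc k)) + of_bool (t k = u) * (b - t k))"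
      by auto
    also have "\<dots> = c * (of_bool (t (Suc k) = u) * (w k * real (n - k)) - D k)"
      unfolding above below D_def c_def by (simp add: field_simps del: of_nat_Suc)
    also have "\<dots> = c * (D (Suc k) - D k)"
      by (simp add: balance D_def)
    finally show ?thesis .
  qed
  have "(\<Sum>k\<le>n. w k / 2 * (of_bool (t (Suc k) = u) * (a - u) + of_bool (t k = u) * (b - u)))
      = (\<Sum>k\<le>n. c * (D (Suc k) - D k))"
    by (rule sum.cong[OF refl], rule term_eq) simp
  also have "\<dots> = c * (\<Sum>k\<le>n. D (Suc k) - D k)"
    by (rule sum_distrib_left[symmetric])
  also have "(\<Sum>k\<le>n. D (Suc k) - D k) = D (Suc n) - D 0"
    using sum_lessThan_telescope[of D "Suc n"] by (simp add: lessThan_Suc_atMost)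
  also have "D (Suc n) - D 0 = 0"
    by (simp add: D_def w_def)
  finally show ?thesis by (simp add: w_def)
qed

lemma grid_ratio_sum_ge:
  assumes "0 \<le> b" and "b < a"
  shows "1 - 2 / real (Suc n)
    \<le> (\<Sum>k\<le>n. real (n choose k) / 2 ^ n * (grid a b n k / grid a b n (Suc k)))"
proof -
  have "(\<Sum>k\<le>n. real (n choose k) / 2 ^ n * (1 - 1 / real (Suc k)))
      \<le> (\<Sum>k\<le>n. real (n choose k) / 2 ^ n * (grid a b n k / grid a b n (Suc k)))"
  proof (intro sum_mono mult_left_mono)
    fix k
    have "real k / real (Suc k) = 1 - 1 / real (Suc k)" by (simp add: field_simps)
    then show "1 - 1 / real (Suc k) \<le> grid a b n k / grid a b n (Suc k)"
      using grid_ratio_ge[OF assms] by metis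
  qed simp
  moreover have "(\<Sum>k\<le>n. real (n choose k) / 2 ^ n * (1 - 1 / real (Suc k)))
      = 1 - (\<Sum>k\<le>n. real (n choose k) / 2 ^ n / real (Suc k))"
    by (simp add: sum_subtractf right_diff_distrib sum_binomial_div_power2 del: of_nat_Suc)
  ultimately show ?thesis
    using sum_binomial_div_power2_Suc_le[of n] by linarith
qed

locale swapped_profiles =
  fixes r r' :: "'n::finite vec" and i j :: 'n
  assumes ij: "i \<noteq> j"
    and swap_i: "r' j = r i" and swap_j: "r' i = r j"
    and gap: "r j < r i"
    and unit_range: "\<And>k. r k \<in> {0..1}" "\<And>k. r' k \<in> {0..1}"
    and others_below: "\<And>k. k \<noteq> i \<Longrightarrow> k \<noteq> j \<Longrightarrow> r k \<le> r j \<and> r' k \<le> r' i"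
begin

abbreviation level :: "nat \<Rightarrow> nat \<Rightarrow> real" where
  "level n \<equiv> grid (r i) (r j) n"

definition signal :: "real \<Rightarrow> real \<Rightarrow> 'n vec" where
  "signal x y l = (if l = i then x else if l = j then y else (r l + r' l) / 2)"

definition outcome :: "nat \<Rightarrow> bool \<times> nat \<Rightarrow> 'n vec \<times> 'n vec" where
  "outcome n = (\<lambda>(e, k). if e then (r, signal (level n (Suc k)) (level n k))
                                else (r', signal (level n k) (level n (Suc k))))"

definition ladder :: "nat \<Rightarrow> ('n vec \<times> 'n vec) pmf" where
  "ladder n = map_pmf (outcome n) (pair_pmf (pmf_of_set UNIV) (binomial_pmf n (1/2)))"

lemma signal_i [simp]: "signal x y i = x"
  and signal_j [simp]: "signal x y j = y"
  using ij by (simp_all add: signal_def)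

lemma signal_other: "l \<noteq> i \<Longrightarrow> l \<noteq> j \<Longrightarrow> signal x y l = (r l + r' l) / 2"
  by (simp add: signal_def)

lemma r_j_nonneg: "0 \<le> r j"
  using unit_range(1)[of j] by simp

lemma expectation_ladder:
  "measure_pmf.expectation (ladder n) g
     = (\<Sum>k\<le>n. real (n choose k) / 2 ^ n / 2 *
          (g (r, signal (level n (Suc k)) (level n k)) + g (r', signal (level n k) (level n (Suc k)))))"
  by (simp add: ladder_def outcome_def expectation_coin_binomial)

lemma prob_ladder:
  "measure_pmf.prob (ladder n) A
     = (\<Sum>k\<le>n. real (n choose k) / 2 ^ n / 2 *
          (indicator A (r, signal (level n (Suc k)) (level n k))
           + indicator A (r', signal (level n k) (level n (Suc k)))))"
  using expectation_ladder[of n "indicator A"] by simp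

lemma set_pmf_ladder: "set_pmf (ladder n) = outcome n ` (UNIV \<times> {..n})"
  by (simp add: ladder_def)

lemma map_fst_ladder: "map_pmf fst (ladder n) = pmf_of_set {r, r'}"
proof -
  have "r \<noteq> r'"
    using gap swap_j by force
  have "fst \<circ> outcome n = (\<lambda>e. if e then r else r') \<circ> fst"
    by (auto simp: outcome_def)
  then have "map_pmf fst (ladder n)
      = map_pmf (\<lambda>e. if e then r else r') (map_pmf fst (pair_pmf (pmf_of_set UNIV) (binomial_pmf n (1/2))))"
    by (simp only: ladder_def pmf.map_comp)
  also have "\<dots> = map_pmf (\<lambda>e. if e then r else r') (pmf_of_set UNIV)"
    by (simp only: map_fst_pair_pmf)
  also have "\<dots> = pmf_of_set ((\<lambda>e. if e then r else r') ` UNIV)"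
    using \<open>r \<noteq> r'\<close> by (intro map_pmf_of_set_inj) (auto simp: inj_on_def)
  also have "(\<lambda>e. if e then r else r') ` UNIV = {r, r'}"
    by (auto simp: UNIV_bool)
  finally show ?thesis .
qed

lemma is_info_structure_ladder: "is_info_structure (pmf_of_set {r, r'}) (ladder n)"
  unfolding is_info_structure_def
proof (intro conjI ballI allI)
  show "finite (set_pmf (ladder n))"
    by (simp add: set_pmf_ladder)
  show "map_pmf fst (ladder n) = pmf_of_set {r, r'}"
    by (rule map_fst_ladder)
next
  fix x l assume "x \<in> set_pmf (ladder n)"
  then obtain e k where "k \<le> n" and x: "x = outcome n (e, k)"
    by (auto simp: set_pmf_ladder)
  have "level n y \<in> {0..1}" if "y \<le> Suc n" for y
    using grid_lower[of "r j" "r i" n y] grid_upper[of "r j" "r i" y n] that gap r_j_nonneg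
      unit_range(1)[of i] by auto
  moreover have "(r l + r' l) / 2 \<in> {0..1}"
    using unit_range[of l] by auto
  ultimately have "signal (level n y) (level n z) l \<in> {0..1}" if "y \<le> Suc n" "z \<le> Suc n" for y z
    using that by (simp add: signal_def)
  then show "snd x l \<in> {0..1}"
    using \<open>k \<le> n\<close> by (auto simp: x outcome_def)
  show "fst x l \<in> {0..1}"
    using unit_range[of l] by (auto simp: x outcome_def)
qed

lemma expectation_given_signal:
  "measure_pmf.expectation (ladder n) (\<lambda>x. indicator {x. snd x l = u} x * fst x l)
     = u * measure_pmf.prob (ladder n) {x. snd x l = u}"
proof -
  let ?A = "{x. snd x l = u}"
  have balance: "(\<Sum>k\<le>n. real (n choose k) / 2 ^ n / 2 *
      (indicator ?A (r, signal (level n (Suc k)) (level n k)) * (r l - u)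
       + indicator ?A (r', signal (level n k) (level n (Suc k))) * (r' l - u))) = 0"
  proof -
    consider "l = i" | "l = j" | "l \<noteq> i" "l \<noteq> j" by blast
    then show ?thesis
    proof cases
      case 1
      then show ?thesis
        using grid_balance_sum[where a = "r i" and b = "r j" and u = u and n = n] by (simp add: swap_j indicator_def)
    next
      case 2
      then show ?thesis
        using grid_balance_sum[where a = "r i" and b = "r j" and u = u and n = n] by (simp add: swap_i indicator_def add.commute)
    next
      case 3
      then have "indicator ?A (r, signal (level n (Suc k)) (level n k)) * (r l - u)
          + indicator ?A (r', signal (level n k) (level n (Suc k))) * (r' l - u) = 0" for k
        by (cases "(r l + r' l) / 2 = u") (auto simp: signal_other)
      then show ?thesis by simp
    qed
  qed
  have "measure_pmf.expectation (ladder n) (\<lambda>x. indicator ?A x * fst x l)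
      - u * measure_pmf.prob (ladder n) ?A
      = (\<Sum>k\<le>n. real (n choose k) / 2 ^ n / 2 *
      (indicator ?A (r, signal (level n (Suc k)) (level n k)) * (r l - u)
       + indicator ?A (r', signal (level n k) (level n (Suc k))) * (r' l - u)))"
    unfolding expectation_ladder prob_ladder
    by (simp add: sum_distrib_left sum_subtractf[symmetric] algebra_simps)
  with balance show ?thesis by simp
qed

lemma calibrated_ladder: "calibrated (ladder n)"
  unfolding calibrated_def cexp_def using expectation_given_signal by simp


lemma correlated_ladder:
  assumes "1 \<le> n"
  shows "correlated (ladder n)"
proof -
  define x0 where "x0 = (r, signal (level n 1) (level n 0))"
  let ?A = "{y. snd y = snd x0}" and ?B = "{y. snd y i = snd x0 i}"
  have x0: "x0 \<in> set_pmf (ladder n)"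
    unfolding set_pmf_ladder x0_def by (rule rev_image_eqI[of "(True, 0)"]) (auto simp: outcome_def)
  then have "0 < measure_pmf.prob (ladder n) ?A" and "0 < measure_pmf.prob (ladder n) ?B"
    by (auto intro: measure_pmf_posI)
  moreover have "indicator ?A (r', signal (level n k) (level n (Suc k))) = (0::real)" for k
  proof -
    have "signal (level n k) (level n (Suc k)) j \<noteq> snd x0 j"
      using grid_eq_iff[OF gap, of n "Suc k" 0] by (simp add: x0_def)
    then show ?thesis by (auto simp: indicator_def dest: fun_cong[where x = j])
  qed
  then have "measure_pmf.expectation (ladder n) (\<lambda>y. indicator ?A y * fst y i)
      = r i * measure_pmf.prob (ladder n) ?A"
    unfolding expectation_ladder prob_ladder by (simp add: sum_distrib_left algebra_simps)
  ultimately have "cexp (ladder n) (\<lambda>y. fst y i) ?A = r i"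
    and "cexp (ladder n) (\<lambda>y. fst y i) ?B = level n 1"
    using expectation_given_signal[of n i "level n 1"] by (simp_all add: cexp_def x0_def)
  moreover have "level n 1 < r i"
    using grid_less_iff[OF gap, of n 1 "Suc n"] assms by simp
  ultimately show ?thesis
    unfolding correlated_def independent_is_def using x0 by force
qed

lemma revenue_ladder_ge:
  assumes "0 \<le> v"
  shows "(1 - 2 / real (Suc n)) * (v * r i) \<le> revenue (\<lambda>_. v) (ladder n)"
proof -
  have level_nonneg: "0 \<le> level n k" for k
    using grid_lower[of "r j" "r i" n k] gap r_j_nonneg by simp
  have others: "signal x y l \<le> level n k" if "l \<noteq> i" "l \<noteq> j" for x y l k
    using others_below[OF that] swap_j grid_lower[of "r j" "r i" n k] gap that
    by (simp add: signal_other)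
  have "rev_at (\<lambda>_. v) r (signal (level n (Suc k)) (level n k))
      = r i * v * level n k / level n (Suc k)" for k
    using rev_at_single_top[OF assms ij, of "signal (level n (Suc k)) (level n k)" r]
    by (simp add: level_nonneg grid_less_iff gap others)
  moreover have "rev_at (\<lambda>_. v) r' (signal (level n k) (level n (Suc k)))
      = r i * v * level n k / level n (Suc k)" for k
    using rev_at_single_top[OF assms ij[symmetric], of "signal (level n k) (level n (Suc k))" r']
    by (simp add: level_nonneg grid_less_iff gap others swap_i)
  ultimately have "revenue (\<lambda>_. v) (ladder n)
      = v * r i * (\<Sum>k\<le>n. real (n choose k) / 2 ^ n * (level n k / level n (Suc k)))"
    unfolding revenue_def expectation_ladder by (simp add: sum_distrib_left field_simps)
  moreover have "0 \<le> v * r i"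
    using assms gap r_j_nonneg by simp
  ultimately show ?thesis
    using grid_ratio_sum_ge[OF r_j_nonneg gap, of n] by (simp add: mult_left_mono mult.commute)
qed

end

theorem mainTheorem5:
  fixes v :: real and r r' :: "'n::finite \<Rightarrow> real" and i j :: 'n
  assumes "CARD('n) \<ge> 2"
    and "v \<ge> 0"
    and "\<forall>k. r k \<in> {0..1} \<and> r' k \<in> {0..1}"
    and "i \<noteq> j"
    and "r i = r' j" and "r' j > r j" and "r j = r' i"
    and "\<forall>k. k \<noteq> i \<and> k \<noteq> j \<longrightarrow> r k \<le> r j \<and> r' k \<le> r' i"
  shows "\<forall>\<epsilon>>0. \<exists>I. is_info_structure (pmf_of_set {r, r'}) I \<and> calibrated I \<and>
           correlated I \<and> revenue (\<lambda>_. v) I \<ge> v * r i - \<epsilon>"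
proof (intro allI impI)
  fix \<epsilon> :: real
  assume "\<epsilon> > 0"
  interpret swapped_profiles r r' i j
  proof
    show "i \<noteq> j" "r' j = r i" "r' i = r j"
      by (fact assms(4), fact assms(5)[symmetric], fact assms(7)[symmetric])
    show "r j < r i"
      using assms(5,6) by simp
    show "r k \<in> {0..1}" "r' k \<in> {0..1}" for k
      using assms(3) by simp_all
    show "k \<noteq> i \<Longrightarrow> k \<noteq> j \<Longrightarrow> r k \<le> r j \<and> r' k \<le> r' i" for k
      using assms(8) by simp
  qed
  obtain n :: nat where "2 * (v * r i) / \<epsilon> < real n"
    using reals_Archimedean2 by blast
  with \<open>\<epsilon> > 0\<close> have "2 * (v * r i) < \<epsilon> * real n"
    by (simp add: divide_less_eq mult.commute)
  also have "\<dots> \<le> \<epsilon> * real (Suc (Suc n))"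
    using \<open>\<epsilon> > 0\<close> by simp
  finally have "2 / real (Suc (Suc n)) * (v * r i) \<le> \<epsilon>"
    by (simp add: field_simps del: of_nat_Suc)
  then have revenue: "v * r i - \<epsilon> \<le> revenue (\<lambda>_. v) (ladder (Suc n))"
    using revenue_ladder_ge[OF assms(2), of "Suc n"] by (simp add: algebra_simps)
  have "correlated (ladder (Suc n))"
    by (rule correlated_ladder) simp
  with revenue is_info_structure_ladder calibrated_ladder
  show "\<exists>I. is_info_structure (pmf_of_set {r, r'}) I \<and> calibrated I \<and>
      correlated I \<and> revenue (\<lambda>_. v) I \<ge> v * r i - \<epsilon>"
    by blast
qed

end
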